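(* Let $k\ge1$ and consider the cycle $C_{4k}$ with consecutive vertices $u,v,w$ (so $u\sim v$ and $v\sim w$). Let $\alpha\ne0$ be real, give the edges $\{u,v\}$ and $\{v,w\}$ weight $1/\alpha$ and all other edges weight $1$. If $|\alpha|>\sqrt{2k-1}$, then $v$ is sedentary.
   Context: For a weighted graph with weighted adjacency matrix $A$, $U(t)=e^{itA}$. A vertex $u$ is sedentary if $\inf_{t>0}|U(t)_{u,u}|\ge C$ for some constant $0<C\le1$. *)

theory Defs
  imports "HOL-Analysis.Analysis"
begin

definition cyc_adj :: "nat \<Rightarrow> nat \<Rightarrow> nat \<Rightarrow> bool" where
  "cyc_adj N i j \<longleftrightarrow> i < N \<and> j < N \<and> (j = (i + 1) mod N \<or> i = (j + 1) mod N)"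

definition wcyc :: "nat \<Rightarrow> nat \<Rightarrow> nat \<Rightarrow> nat \<Rightarrow> real \<Rightarrow> nat \<Rightarrow> nat \<Rightarrow> real" where
  "wcyc N u v w \<alpha> i j =
     (if cyc_adj N i j then
        (if {i, j} = {u, v} \<or> {i, j} = {v, w} then 1 / \<alpha> else 1)
      else 0)"

fun mat_pow :: "nat \<Rightarrow> (nat \<Rightarrow> nat \<Rightarrow> complex) \<Rightarrow> nat \<Rightarrow> nat \<Rightarrow> nat \<Rightarrow> complex" where
  "mat_pow N A 0 = (\<lambda>i j. if i = j then 1 else 0)"
| "mat_pow N A (Suc n) = (\<lambda>i j. \<Sum>l<N. A i l * mat_pow N A n l j)"

definition transition :: "nat \<Rightarrow> (nat \<Rightarrow> nat \<Rightarrow> real) \<Rightarrow> real \<Rightarrow> nat \<Rightarrow> nat \<Rightarrow> complex" where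
  "transition N A t a b =
     (\<Sum>n. (\<i> * complex_of_real t) ^ n / of_nat (fact n)
             * mat_pow N (\<lambda>i j. complex_of_real (A i j)) n a b)"

definition sedentary :: "nat \<Rightarrow> (nat \<Rightarrow> nat \<Rightarrow> real) \<Rightarrow> nat \<Rightarrow> bool" where
  "sedentary N A a \<longleftrightarrow>
     (\<exists>C::real. 0 < C \<and> C \<le> 1 \<and> (INF t\<in>{0<..}. cmod (transition N A t a a)) \<ge> C)"

end

theory Submission
  imports Defs
begin

(* If x is a real null vector of the symmetric matrix A with x v = 1, then U(t) = exp(itA)
   fixes x. Split e_v = c x + r orthogonally, with c = 1 / |x|^2 and |r|^2 = 1 - c; then
   U(t)_vv = c + <r, U(t) r>, and the last term has modulus at most |r|^2 because U(t) is
   unitary. Hence |U(t)_vv| >= 2 / |x|^2 - 1, which is positive as soon as |x|^2 < 2.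
   On C_4k such a vector is x_v = 1 and x_l = cos (pi d / 2) / alpha for the other vertices l
   at offset d from v: the weight 1/alpha on the two edges at v is exactly compensated by the
   value 1 at v, and 4 | N makes the pattern close up around the cycle. Its squared norm is
   1 + (2k - 1) / alpha^2, which is below 2 precisely when alpha^2 > 2k - 1. *)

section \<open>Powers of a matrix and the transition matrix\<close>

lemma mat_pow_add:
  assumes "a < N"
  shows "mat_pow N P (m + n) a b = (\<Sum>l<N. mat_pow N P m a l * mat_pow N P n l b)"
  using assms
proof (induction m arbitrary: a)
  case 0
  then show ?case by (simp add: if_distrib[where f = "\<lambda>x. x * _"] cong: if_cong)
next
  case (Suc m)
  have "mat_pow N P (Suc m + n) a b = (\<Sum>l<N. P a l * (\<Sum>l'<N. mat_pow N P m l l' * mat_pow N P n l' b))"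
    using Suc.IH by simp
  also have "\<dots> = (\<Sum>l'<N. (\<Sum>l<N. P a l * mat_pow N P m l l') * mat_pow N P n l' b)"
    unfolding sum_distrib_left sum_distrib_right mult.assoc by (rule sum.swap)
  finally show ?case by simp
qed

lemma mat_pow_Suc_right:
  assumes "a < N" "b < N"
  shows "mat_pow N P (Suc n) a b = (\<Sum>l<N. mat_pow N P n a l * P l b)"
  using mat_pow_add[OF assms(1), of P n 1 b] assms(2)
  by (simp add: if_distrib[where f = "\<lambda>x. _ * x"] cong: if_cong)

lemma mat_pow_symmetric:
  assumes "\<And>i j. i < N \<Longrightarrow> j < N \<Longrightarrow> P i j = P j i" "a < N" "b < N"
  shows "mat_pow N P n a b = mat_pow N P n b a"
  using assms(2,3)
proof (induction n arbitrary: a b)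
  case 0
  then show ?case by auto
next
  case (Suc n)
  have "mat_pow N P (Suc n) a b = (\<Sum>l<N. mat_pow N P n a l * P l b)"
    using mat_pow_Suc_right Suc.prems by blast
  also have "\<dots> = (\<Sum>l<N. P b l * mat_pow N P n l a)"
    using Suc.IH Suc.prems assms(1) by (intro sum.cong) (auto simp: mult.commute)
  finally show ?case by simp
qed

lemma cnj_mat_pow_of_real:
  "cnj (mat_pow N (\<lambda>i j. complex_of_real (A i j)) n a b)
     = mat_pow N (\<lambda>i j. complex_of_real (A i j)) n a b"
  by (induction n arbitrary: a b) auto

lemma norm_mat_pow_le:
  assumes "a < N"
  shows "norm (mat_pow N P n a b) \<le> (\<Sum>i<N. \<Sum>j<N. norm (P i j)) ^ n"
  using assms
proof (induction n arbitrary: a)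
  case 0
  then show ?case by auto
next
  case (Suc n)
  let ?M = "\<Sum>i<N. \<Sum>j<N. norm (P i j)"
  have "norm (mat_pow N P (Suc n) a b) \<le> (\<Sum>l<N. norm (P a l) * ?M ^ n)"
    using Suc.IH by (auto simp: norm_mult intro!: order_trans[OF norm_sum] sum_mono mult_left_mono)
  also have "\<dots> \<le> ?M * ?M ^ n"
    unfolding sum_distrib_right[symmetric] using Suc.prems
    by (intro mult_right_mono member_le_sum[where f = "\<lambda>i. \<Sum>j<N. norm (P i j)"])
      (auto intro!: sum_nonneg zero_le_power)
  finally show ?case by simp
qed

lemma summable_norm_exp_mat_pow:
  assumes "a < N"
  shows "summable (\<lambda>n. norm (z ^ n / of_nat (fact n) * mat_pow N P n a b))"
proof (rule summable_comparison_test'[OF summable_exp])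
  let ?M = "\<Sum>i<N. \<Sum>j<N. norm (P i j)"
  fix n
  have "norm z ^ n / fact n * norm (mat_pow N P n a b) \<le> norm z ^ n / fact n * ?M ^ n"
    by (intro mult_left_mono norm_mat_pow_le assms) auto
  then show "norm (norm (z ^ n / of_nat (fact n) * mat_pow N P n a b)) \<le> inverse (fact n) * (norm z * ?M) ^ n"
    by (simp add: norm_mult norm_divide norm_power power_mult_distrib field_simps)
qed

lemma transition_sums:
  assumes "a < N"
  shows "(\<lambda>n. (\<i> * of_real t) ^ n / of_nat (fact n) * mat_pow N (\<lambda>i j. of_real (A i j)) n a b)
           sums transition N A t a b"
  unfolding transition_def
  by (intro summable_sums summable_norm_cancel[OF summable_norm_exp_mat_pow] assms)

lemma transition_symmetric:
  assumes "\<And>i j. i < N \<Longrightarrow> j < N \<Longrightarrow> A i j = A j i" "a < N" "b < N"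
  shows "transition N A t a b = transition N A t b a"
  unfolding transition_def using assms by (simp add: mat_pow_symmetric[of N])

lemma cnj_transition:
  assumes "a < N"
  shows "cnj (transition N A t a b) = transition N A (- t) a b"
proof -
  have "(\<lambda>n. cnj ((\<i> * of_real t) ^ n / of_nat (fact n) * mat_pow N (\<lambda>i j. of_real (A i j)) n a b))
          sums cnj (transition N A t a b)"
    using transition_sums[OF assms] by (rule sums_cnj[THEN iffD2])
  then show ?thesis
    using transition_sums[OF assms, of "- t"] by (simp add: cnj_mat_pow_of_real sums_iff)
qed

lemma transition_at_0:
  assumes "a < N"
  shows "transition N A 0 a b = (if a = b then 1 else 0)"
proof -
  have "(\<lambda>n. (\<i> * of_real 0) ^ n / of_nat (fact n) * mat_pow N (\<lambda>i j. of_real (A i j)) n a b)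
      = (\<lambda>n. if n = 0 then (if a = b then 1 else 0) else 0)"
    by (auto simp: power_0_left)
  then show ?thesis
    using transition_sums[OF assms, of 0 A b] sums_single[of 0 "\<lambda>_. if a = b then 1 else (0::complex)"]
    by (simp add: sums_unique2)
qed

lemma exp_mat_pow_Cauchy_coeff:
  fixes x y :: complex
  assumes "a < N"
  shows "(\<Sum>i\<le>n. \<Sum>l<N. (x ^ i / of_nat (fact i) * mat_pow N P i a l)
                        * (y ^ (n - i) / of_nat (fact (n - i)) * mat_pow N P (n - i) l b))
         = (x + y) ^ n / of_nat (fact n) * mat_pow N P n a b"
proof -
  have "(\<Sum>i\<le>n. \<Sum>l<N. (x ^ i / of_nat (fact i) * mat_pow N P i a l)
                        * (y ^ (n - i) / of_nat (fact (n - i)) * mat_pow N P (n - i) l b))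
      = (\<Sum>i\<le>n. x ^ i / of_nat (fact i) * (y ^ (n - i) / of_nat (fact (n - i))) * mat_pow N P n a b)"
  proof (rule sum.cong[OF refl])
    fix i assume "i \<in> {..n}"
    then have "mat_pow N P n a b = (\<Sum>l<N. mat_pow N P i a l * mat_pow N P (n - i) l b)"
      using mat_pow_add[OF assms, of P i "n - i" b] by simp
    then show "(\<Sum>l<N. (x ^ i / of_nat (fact i) * mat_pow N P i a l)
                 * (y ^ (n - i) / of_nat (fact (n - i)) * mat_pow N P (n - i) l b))
             = x ^ i / of_nat (fact i) * (y ^ (n - i) / of_nat (fact (n - i))) * mat_pow N P n a b"
      by (simp add: sum_distrib_left mult_ac)
  qed
  also have "\<dots> = (x + y) ^ n / of_nat (fact n) * mat_pow N P n a b"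
  proof -
    have "(x + y) ^ n / of_nat (fact n)
        = (\<Sum>i\<le>n. x ^ i / of_nat (fact i) * (y ^ (n - i) / of_nat (fact (n - i))))"
      using exp_series_add_commuting[of x y n]
      by (simp add: scaleR_conv_of_real divide_inverse mult.commute)
    then show ?thesis by (simp add: sum_distrib_right)
  qed
  finally show ?thesis .
qed

lemma transition_add:
  assumes "a < N" "b < N"
  shows "(\<Sum>l<N. transition N A s a l * transition N A t l b) = transition N A (s + t) a b"
proof -
  let ?P = "\<lambda>i j. complex_of_real (A i j)"
  define F where "F l n = (\<i> * of_real s) ^ n / of_nat (fact n) * mat_pow N ?P n a l" for l n
  define G where "G l n = (\<i> * of_real t) ^ n / of_nat (fact n) * mat_pow N ?P n l b" for l n
  have F: "summable (\<lambda>n. norm (F l n))" for l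
    unfolding F_def by (rule summable_norm_exp_mat_pow[OF assms(1)])
  have G: "summable (\<lambda>n. norm (G l n))" if "l < N" for l
    unfolding G_def by (rule summable_norm_exp_mat_pow[OF that])
  have "(\<Sum>l<N. transition N A s a l * transition N A t l b)
      = (\<Sum>l<N. \<Sum>n. \<Sum>i\<le>n. F l i * G l (n - i))"
    unfolding transition_def F_def[abs_def] G_def[abs_def] using F G
    by (intro sum.cong refl Cauchy_product) (auto simp: F_def G_def)
  also have "\<dots> = (\<Sum>n. \<Sum>l<N. \<Sum>i\<le>n. F l i * G l (n - i))"
    using F G by (intro suminf_sum[symmetric] summable_Cauchy_product) auto
  also have "\<dots> = (\<Sum>n. (\<i> * of_real s + \<i> * of_real t) ^ n / of_nat (fact n) * mat_pow N ?P n a b)"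
  proof (rule suminf_cong)
    fix n
    show "(\<Sum>l<N. \<Sum>i\<le>n. F l i * G l (n - i))
          = (\<i> * of_real s + \<i> * of_real t) ^ n / of_nat (fact n) * mat_pow N ?P n a b"
      unfolding F_def G_def by (subst sum.swap) (rule exp_mat_pow_Cauchy_coeff[OF assms(1)])
  qed
  also have "\<dots> = transition N A (s + t) a b"
    by (simp add: transition_def distrib_left)
  finally show ?thesis .
qed


section \<open>Sedentariness from a null vector\<close>

definition transition_vec ::
    "nat \<Rightarrow> (nat \<Rightarrow> nat \<Rightarrow> real) \<Rightarrow> real \<Rightarrow> (nat \<Rightarrow> real) \<Rightarrow> nat \<Rightarrow> complex" where
  "transition_vec N A t x a = (\<Sum>b<N. transition N A t a b * of_real (x b))"

lemma mat_pow_null_vec: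
  assumes "a < N" and null: "\<And>i. i < N \<Longrightarrow> (\<Sum>l<N. A i l * x l) = 0"
  shows "(\<Sum>b<N. mat_pow N (\<lambda>i j. of_real (A i j)) n a b * of_real (x b))
         = (if n = 0 then of_real (x a) else 0)"
proof (cases n)
  case 0
  then show ?thesis using assms(1) by (simp add: if_distrib[where f = "\<lambda>z. z * _"] cong: if_cong)
next
  case (Suc m)
  let ?P = "\<lambda>i j. complex_of_real (A i j)"
  have "(\<Sum>b<N. mat_pow N ?P (Suc m) a b * of_real (x b))
      = (\<Sum>b<N. \<Sum>l<N. mat_pow N ?P m a l * (?P l b * of_real (x b)))"
    using assms(1) by (simp add: mat_pow_Suc_right sum_distrib_right mult.assoc del: mat_pow.simps(2))
  also have "\<dots> = (\<Sum>l<N. mat_pow N ?P m a l * of_real (\<Sum>b<N. A l b * x b))"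
    by (subst sum.swap) (simp add: sum_distrib_left)
  finally show ?thesis using Suc null by simp
qed

lemma transition_vec_null:
  assumes "a < N" and null: "\<And>i. i < N \<Longrightarrow> (\<Sum>l<N. A i l * x l) = 0"
  shows "transition_vec N A t x a = of_real (x a)"
proof -
  let ?c = "\<lambda>n. (\<i> * complex_of_real t) ^ n / of_nat (fact n)"
  let ?P = "\<lambda>i j. complex_of_real (A i j)"
  have "(\<lambda>n. \<Sum>b<N. ?c n * mat_pow N ?P n a b * of_real (x b)) sums transition_vec N A t x a"
    unfolding transition_vec_def by (intro sums_sum sums_mult2 transition_sums assms(1))
  moreover have "(\<Sum>b<N. ?c n * mat_pow N ?P n a b * of_real (x b)) = (if n = 0 then of_real (x a) else 0)" for n
  proof -
    have "(\<Sum>b<N. ?c n * mat_pow N ?P n a b * of_real (x b))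
        = ?c n * (\<Sum>b<N. mat_pow N ?P n a b * of_real (x b))"
      by (simp only: sum_distrib_left mult.assoc)
    also have "(\<Sum>b<N. mat_pow N ?P n a b * of_real (x b)) = (if n = 0 then of_real (x a) else 0)"
      using assms(1) null by (rule mat_pow_null_vec)
    finally show ?thesis by simp
  qed
  ultimately show ?thesis
    using sums_single[of 0 "\<lambda>_. complex_of_real (x a)"] by (simp add: sums_unique2)
qed

lemma sum_norm_transition_vec:
  assumes sym: "\<And>i j. i < N \<Longrightarrow> j < N \<Longrightarrow> A i j = A j i"
  shows "(\<Sum>a<N. (cmod (transition_vec N A t r a))\<^sup>2) = (\<Sum>b<N. (r b)\<^sup>2)"
proof -
  let ?U = "transition N A t"
  have "complex_of_real (\<Sum>a<N. (cmod (transition_vec N A t r a))\<^sup>2)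
      = (\<Sum>a<N. cnj (transition_vec N A t r a) * transition_vec N A t r a)"
    unfolding of_real_sum complex_norm_square by (simp add: mult.commute)
  also have "\<dots> = (\<Sum>a<N. \<Sum>b<N. \<Sum>b'<N. (cnj (?U a b) * of_real (r b)) * (?U a b' * of_real (r b')))"
    unfolding transition_vec_def by (simp add: cnj_sum sum_product)
  also have "\<dots> = (\<Sum>b<N. \<Sum>b'<N. \<Sum>a<N. (cnj (?U a b) * of_real (r b)) * (?U a b' * of_real (r b')))"
    by (rule trans[OF sum.swap], rule sum.cong[OF refl], rule sum.swap)
  also have "\<dots> = (\<Sum>b<N. \<Sum>b'<N. of_real (r b * r b') * (\<Sum>a<N. transition N A (- t) b a * ?U a b'))"
  proof -
    have cnj_U: "cnj (?U a b) = transition N A (- t) b a" if "a < N" "b < N" for a b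
      using cnj_transition[OF that(1), of A t b] transition_symmetric[OF sym that, where t = "- t"]
      by (rule trans)
    show ?thesis
      by (intro sum.cong refl) (simp add: cnj_U sum_distrib_left mult_ac)
  qed
  also have "\<dots> = (\<Sum>b<N. \<Sum>b'<N. if b = b' then of_real ((r b)\<^sup>2) else 0)"
    by (intro sum.cong refl) (simp add: transition_add transition_at_0 power2_eq_square)
  also have "\<dots> = (\<Sum>b<N. complex_of_real ((r b)\<^sup>2))"
    by simp
  finally show ?thesis by (simp only: of_real_sum[symmetric] of_real_eq_iff)
qed

lemma inner_null_transition_vec:
  assumes sym: "\<And>i j. i < N \<Longrightarrow> j < N \<Longrightarrow> A i j = A j i"
    and null: "\<And>i. i < N \<Longrightarrow> (\<Sum>l<N. A i l * x l) = 0"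
  shows "(\<Sum>a<N. of_real (x a) * transition_vec N A t r a) = of_real (\<Sum>b<N. x b * r b)"
proof -
  have "(\<Sum>a<N. of_real (x a) * transition_vec N A t r a)
      = (\<Sum>b<N. (\<Sum>a<N. transition N A t b a * of_real (x a)) * of_real (r b))"
    unfolding transition_vec_def sum_distrib_left sum_distrib_right
    by (subst sum.swap) (auto simp: transition_symmetric[OF sym, where t = t] mult_ac intro!: sum.cong)
  also have "\<dots> = (\<Sum>b<N. of_real (x b) * of_real (r b))"
    using transition_vec_null[OF _ null] by (simp add: transition_vec_def)
  finally show ?thesis by simp
qed

lemma norm_inner_transition_vec_le:
  assumes "\<And>i j. i < N \<Longrightarrow> j < N \<Longrightarrow> A i j = A j i"
  shows "cmod (\<Sum>a<N. of_real (r a) * transition_vec N A t r a) \<le> (\<Sum>a<N. (r a)\<^sup>2)"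
proof -
  have "cmod (\<Sum>a<N. of_real (r a) * transition_vec N A t r a)
      \<le> (\<Sum>a<N. \<bar>r a\<bar> * \<bar>cmod (transition_vec N A t r a)\<bar>)"
    by (rule order_trans[OF norm_sum]) (simp add: norm_mult)
  also have "\<dots> \<le> L2_set r {..<N} * L2_set (\<lambda>a. cmod (transition_vec N A t r a)) {..<N}"
    by (rule L2_set_mult_ineq)
  also have "\<dots> = (\<Sum>a<N. (r a)\<^sup>2)"
    by (simp add: L2_set_def sum_norm_transition_vec[OF assms] sum_nonneg)
  finally show ?thesis .
qed

lemma transition_diag_decompose:
  assumes sym: "\<And>i j. i < N \<Longrightarrow> j < N \<Longrightarrow> A i j = A j i"
    and null: "\<And>i. i < N \<Longrightarrow> (\<Sum>l<N. A i l * x l) = 0"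
    and "v < N" and "x v = 1"
    and decomp: "\<And>l. r l + c * x l = (if l = v then 1 else 0)"
    and orth: "(\<Sum>l<N. x l * r l) = 0"
  shows "transition N A t v v = of_real c + (\<Sum>a<N. of_real (r a) * transition_vec N A t r a)"
proof -
  have "transition N A t v v = transition_vec N A t (\<lambda>b. r b + c * x b) v"
    using assms(3)
    by (simp add: transition_vec_def decomp if_distrib[where f = complex_of_real]
        if_distrib[where f = "\<lambda>z. _ * z"] cong: if_cong)
  also have "\<dots> = transition_vec N A t r v + of_real c * transition_vec N A t x v"
    by (simp add: transition_vec_def algebra_simps sum.distrib sum_distrib_left)
  also have "transition_vec N A t r v = (\<Sum>a<N. of_real (r a + c * x a) * transition_vec N A t r a)"
    using assms(3)
    by (simp add: decomp if_distrib[where f = complex_of_real] if_distrib[where f = "\<lambda>z. z * _"]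
        cong: if_cong)
  also have "\<dots> = (\<Sum>a<N. of_real (r a) * transition_vec N A t r a)"
    using inner_null_transition_vec[OF sym null, where r = r and t = t] orth
    by (simp add: distrib_right sum.distrib mult.assoc sum_distrib_left[symmetric])
  finally show ?thesis
    using transition_vec_null[OF assms(3) null] assms(4) by simp
qed

lemma norm_transition_diag_ge:
  assumes sym: "\<And>i j. i < N \<Longrightarrow> j < N \<Longrightarrow> A i j = A j i"
    and null: "\<And>i. i < N \<Longrightarrow> (\<Sum>l<N. A i l * x l) = 0"
    and "v < N" and "x v = 1"
  shows "2 / (\<Sum>l<N. (x l)\<^sup>2) - 1 \<le> cmod (transition N A t v v)"
proof -
  define S where "S = (\<Sum>l<N. (x l)\<^sup>2)"
  define c where "c = 1 / S"
  define r where "r l = (if l = v then 1 else 0) - c * x l" for l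
  have "1 \<le> S"
    unfolding S_def using member_le_sum[of v "{..<N}" "\<lambda>l. (x l)\<^sup>2"] assms(3,4) by simp
  then have "0 < c" and cS: "c * S = 1"
    by (simp_all add: c_def)
  have delta: "(\<Sum>b<N. f b * (if b = v then 1 else 0)) = f v" for f :: "nat \<Rightarrow> real"
    using assms(3) by (simp add: if_distrib[where f = "\<lambda>z. _ * z"] cong: if_cong)
  have xr: "(\<Sum>l<N. x l * r l) = 0"
    using assms(4) cS delta[of x]
    by (simp add: r_def S_def right_diff_distrib sum_subtractf sum_distrib_left power2_eq_square mult_ac)
  have rr: "(\<Sum>b<N. (r b)\<^sup>2) = 1 - c"
  proof -
    have "(r b)\<^sup>2 = (if b = v then 1 else 0) - 2 * c * (x b * (if b = v then 1 else 0)) + c * (c * (x b)\<^sup>2)" for b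
      by (simp add: r_def power2_eq_square algebra_simps)
    then show ?thesis
      using assms(3,4) cS delta[of x]
      by (simp add: sum.distrib sum_subtractf sum_distrib_left[symmetric] S_def del: sum_distrib_left)
  qed
  have "transition N A t v v = of_real c + (\<Sum>a<N. of_real (r a) * transition_vec N A t r a)"
  proof (rule transition_diag_decompose[OF sym null assms(3,4) _ xr])
    show "r l + c * x l = (if l = v then 1 else 0)" for l
      by (simp add: r_def)
  qed
  then have "c - (1 - c) \<le> cmod (transition N A t v v)"
    using norm_inner_transition_vec_le[where N = N and A = A and r = r and t = t, OF sym] rr
      norm_diff_ineq[of "of_real c" "\<Sum>a<N. of_real (r a) * transition_vec N A t r a"] \<open>0 < c\<close>
    by simp
  then show ?thesis
    by (simp add: c_def S_def)
qed

lemma sedentary_if_null_vec: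
  assumes "\<And>i j. i < N \<Longrightarrow> j < N \<Longrightarrow> A i j = A j i"
    and "\<And>i. i < N \<Longrightarrow> (\<Sum>l<N. A i l * x l) = 0"
    and "v < N" and "x v = 1" and "(\<Sum>l<N. (x l)\<^sup>2) < 2"
  shows "sedentary N A v"
proof -
  let ?S = "\<Sum>l<N. (x l)\<^sup>2"
  have "1 \<le> ?S"
    using member_le_sum[of v "{..<N}" "\<lambda>l. (x l)\<^sup>2"] assms(3,4) by simp
  then have "0 < 2 / ?S - 1" "2 / ?S - 1 \<le> 1"
    using assms(5) by (simp_all add: field_simps)
  moreover have "2 / ?S - 1 \<le> (INF t\<in>{0<..}. cmod (transition N A t v v))"
    using norm_transition_diag_ge[OF assms(1-4)] by (intro cINF_greatest) auto
  ultimately show ?thesis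
    unfolding sedentary_def by blast
qed

section \<open>The weighted cycle\<close>

(* quarter_cos m = cos (m * pi / 2) *)
definition quarter_cos :: "nat \<Rightarrow> real" where
  "quarter_cos m = (if m mod 4 = 0 then 1 else if m mod 4 = 2 then -1 else 0)"

lemma quarter_cos_cong: "m mod 4 = n mod 4 \<Longrightarrow> quarter_cos m = quarter_cos n"
  by (simp add: quarter_cos_def)

lemma quarter_cos_add_2: "quarter_cos (m + 2) = - quarter_cos m"
proof -
  have "m mod 4 \<in> {0, 1, 2, 3}"
    by auto
  moreover have "(m + 2) mod 4 = (m mod 4 + 2) mod 4"
    by (rule mod_add_left_eq[symmetric])
  ultimately show ?thesis by (auto simp: quarter_cos_def)
qed

lemma quarter_cos_squared: "(quarter_cos m)\<^sup>2 = (if even m then 1 else 0)"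
proof -
  have "m mod 4 \<in> {0, 1, 2, 3}"
    by auto
  moreover have "even m \<longleftrightarrow> even (m mod 4)"
    by (simp add: dvd_mod_iff)
  ultimately show ?thesis by (auto simp: quarter_cos_def)
qed

lemma quarter_cos_eq_0_iff: "quarter_cos m = 0 \<longleftrightarrow> odd m"
  using quarter_cos_squared[of m] by (auto simp: power2_eq_square split: if_splits)

lemma quarter_cos_mod_offset:
  assumes "4 dvd N" "v \<le> N"
  shows "quarter_cos (j mod N + N - v) = quarter_cos (j + N - v)"
proof (rule quarter_cos_cong)
  have "(j mod N + (N - v)) mod 4 = (j + (N - v)) mod 4"
    using assms(1) by (metis mod_add_left_eq mod_mod_cancel)
  then show "(j mod N + N - v) mod 4 = (j + N - v) mod 4"
    using assms(2) by simp
qed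

lemma quarter_cos_succ_offset:
  assumes "4 dvd N" "v \<le> N"
  shows "quarter_cos (Suc i mod N + N - v) = quarter_cos (i + N - v + 1)"
  using assms by (simp add: quarter_cos_mod_offset Suc_diff_le)

lemma quarter_cos_pred_offset:
  assumes "4 dvd N" "v \<le> N" "0 < N"
  shows "quarter_cos ((i + N - 1) mod N + N - v) = quarter_cos (i + N - v + 3)"
proof -
  obtain q where q: "N = 4 * q"
    using assms(1) ..
  have "i + N - 1 + N - v = (i + N - v + 3) + 4 * (q - 1)"
    using assms(2,3) unfolding q by simp
  then have "(i + N - 1 + N - v) mod 4 = (i + N - v + 3) mod 4"
    by (simp only: mod_mult_self2)
  then show ?thesis
    unfolding quarter_cos_mod_offset[OF assms(1,2)] by (rule quarter_cos_cong)
qed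

lemma sum_lessThan_double_if_even:
  "(\<Sum>l<2 * n. if even (l + c) then a else 0) = real n * a"
  by (induction n) (auto simp: algebra_simps)

lemma cyc_adj_iff: "cyc_adj N i j \<longleftrightarrow> i < N \<and> (j = Suc i mod N \<or> j = (i + N - 1) mod N)"
proof (cases "i < N")
  case True
  then have "i = Suc j mod N \<longleftrightarrow> j = (i + N - 1) mod N" if "j < N"
    using that by (cases "Suc j = N"; cases "i = 0") (auto simp: mod_if)
  then show ?thesis unfolding cyc_adj_def using True by auto
qed (simp add: cyc_adj_def)

lemma sum_cyc_adj:
  assumes "3 \<le> N" "i < N"
  shows "(\<Sum>l<N. if cyc_adj N i l then f l else 0) = f (Suc i mod N) + f ((i + N - 1) mod N)"
proof -
  let ?s = "Suc i mod N" and ?p = "(i + N - 1) mod N"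
  have "?s \<noteq> ?p"
    using assms by (auto simp: mod_if)
  then have "(\<Sum>l<N. if cyc_adj N i l then f l else 0)
           = (\<Sum>l<N. (if l = ?s then f l else 0) + (if l = ?p then f l else 0))"
    using assms(2) by (intro sum.cong) (auto simp: cyc_adj_iff)
  then show ?thesis
    using assms by (simp add: sum.distrib)
qed

lemma wcyc_symmetric: "wcyc N u v w \<alpha> i j = wcyc N u v w \<alpha> j i"
  unfolding wcyc_def cyc_adj_def by (auto simp: insert_commute)

lemma wcyc_adjacent:
  assumes "cyc_adj N u v" "cyc_adj N v w" "u \<noteq> w" "cyc_adj N i l"
  shows "wcyc N u v w \<alpha> i l = (if i = v \<or> l = v then 1 / \<alpha> else 1)"
proof -
  have adj_commute: "cyc_adj N a b \<longleftrightarrow> cyc_adj N b a" for a b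
    by (auto simp: cyc_adj_def)
  have "cyc_adj N v u" "cyc_adj N v w"
    using assms(1,2) adj_commute by blast+
  then have "j = u \<or> j = w" if "cyc_adj N v j" for j
    using that assms(3) unfolding cyc_adj_iff[of N v] by blast
  then show ?thesis
    using assms adj_commute unfolding wcyc_def by (auto simp: doubleton_eq_iff)
qed

(* l + N - v is the offset of l from v along the cycle, shifted by N to avoid truncated
   subtraction; when 4 dvd N the shift does not change quarter_cos. *)
definition cyc_null_vec :: "nat \<Rightarrow> nat \<Rightarrow> real \<Rightarrow> nat \<Rightarrow> real" where
  "cyc_null_vec N v \<alpha> l = quarter_cos (l + N - v) * (if l = v then 1 else 1 / \<alpha>)"

lemma wcyc_cyc_null_vec:
  assumes "4 dvd N" "cyc_adj N u v" "cyc_adj N v w" "u \<noteq> w" "i < N"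
  shows "(\<Sum>l<N. wcyc N u v w \<alpha> i l * cyc_null_vec N v \<alpha> l) = 0"
proof -
  let ?W = "wcyc N u v w \<alpha>" and ?m = "i + N - v"
  have "v < N" "4 \<le> N"
    using assms(1,2) by (auto simp: cyc_adj_def dest: dvd_imp_le)
  have "(\<Sum>l<N. ?W i l * cyc_null_vec N v \<alpha> l)
      = (\<Sum>l<N. if cyc_adj N i l then ?W i l * cyc_null_vec N v \<alpha> l else 0)"
    by (intro sum.cong) (auto simp: wcyc_def)
  also have "\<dots> = ?W i (Suc i mod N) * cyc_null_vec N v \<alpha> (Suc i mod N)
                + ?W i ((i + N - 1) mod N) * cyc_null_vec N v \<alpha> ((i + N - 1) mod N)"
    using \<open>4 \<le> N\<close> assms(5) by (intro sum_cyc_adj) auto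
  also have "\<dots> = 0"
  proof -
    have qs: "quarter_cos (Suc i mod N + N - v) = quarter_cos (?m + 1)"
      using assms(1) \<open>v < N\<close> by (intro quarter_cos_succ_offset) auto
    have qp: "quarter_cos ((i + N - 1) mod N + N - v) = quarter_cos (?m + 3)"
      using assms(1) \<open>v < N\<close> by (intro quarter_cos_pred_offset) auto
    show ?thesis
    proof (cases "even ?m")
      case True
      then have "quarter_cos (?m + 1) = 0" "quarter_cos (?m + 3) = 0"
        by (simp_all add: quarter_cos_eq_0_iff)
      then show ?thesis
        using qs qp by (simp add: cyc_null_vec_def)
    next
      case False
      then have "i \<noteq> v"
        using assms(1) by auto
      have "cyc_adj N i (Suc i mod N)" "cyc_adj N i ((i + N - 1) mod N)"
        using assms(5) by (simp_all add: cyc_adj_iff)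
      then have "?W i l * cyc_null_vec N v \<alpha> l = quarter_cos (l + N - v) / \<alpha>"
        if "l \<in> {Suc i mod N, (i + N - 1) mod N}" for l
        using that wcyc_adjacent[OF assms(2-4)] \<open>i \<noteq> v\<close> by (auto simp: cyc_null_vec_def)
      moreover have "quarter_cos (?m + 3) = - quarter_cos (?m + 1)"
        using quarter_cos_add_2[of "?m + 1"] by (simp add: numeral_3_eq_3)
      ultimately show ?thesis
        using qs qp by (simp add: add_divide_distrib[symmetric])
    qed
  qed
  finally show ?thesis .
qed

lemma sum_squares_cyc_null_vec:
  assumes "4 dvd N" "v < N"
  shows "(\<Sum>l<N. (cyc_null_vec N v \<alpha> l)\<^sup>2) = 1 + (real N / 2 - 1) / \<alpha>\<^sup>2"
proof -
  obtain n where N: "N = 2 * n"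
    using assms(1) by (auto elim!: dvdE)
  have "(cyc_null_vec N v \<alpha> l)\<^sup>2
      = (if even (l + (N - v)) then 1 / \<alpha>\<^sup>2 else 0) + (if l = v then 1 - 1 / \<alpha>\<^sup>2 else 0)" for l
    using assms(2) N
    by (auto simp: cyc_null_vec_def power_mult_distrib quarter_cos_squared power_divide)
  then have "(\<Sum>l<N. (cyc_null_vec N v \<alpha> l)\<^sup>2)
      = (\<Sum>l<2 * n. if even (l + (N - v)) then 1 / \<alpha>\<^sup>2 else 0)
        + (\<Sum>l<N. if l = v then 1 - 1 / \<alpha>\<^sup>2 else 0)"
    unfolding N by (simp only: sum.distrib)
  also have "\<dots> = real n * (1 / \<alpha>\<^sup>2) + (1 - 1 / \<alpha>\<^sup>2)"
    using assms(2) by (simp only: sum_lessThan_double_if_even) simp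
  finally show ?thesis
    by (simp add: N diff_divide_distrib add_divide_distrib)
qed

theorem proposition46:
  fixes k u v w :: nat and \<alpha> :: real
  assumes "k \<ge> 1"
    and "cyc_adj (4 * k) u v" and "cyc_adj (4 * k) v w" and "u \<noteq> w"
    and "\<alpha> \<noteq> 0"
    and "\<bar>\<alpha>\<bar> > sqrt (2 * real k - 1)"
  shows "sedentary (4 * k) (wcyc (4 * k) u v w \<alpha>) v"
proof (rule sedentary_if_null_vec)
  let ?N = "4 * k"
  show "v < ?N"
    using assms(2) by (simp add: cyc_adj_def)
  show "wcyc ?N u v w \<alpha> i j = wcyc ?N u v w \<alpha> j i" for i j
    by (rule wcyc_symmetric)
  show "(\<Sum>l<?N. wcyc ?N u v w \<alpha> i l * cyc_null_vec ?N v \<alpha> l) = 0" if "i < ?N" for i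
    using assms(2-4) that by (intro wcyc_cyc_null_vec) auto
  show "cyc_null_vec ?N v \<alpha> v = 1"
    by (simp add: cyc_null_vec_def quarter_cos_def)
  have "sqrt (2 * real k - 1) < sqrt (\<alpha>\<^sup>2)"
    using assms(6) by simp
  then have "2 * real k - 1 < \<alpha>\<^sup>2"
    by (simp only: real_sqrt_less_iff)
  then have "(2 * real k - 1) / \<alpha>\<^sup>2 < 1"
    using assms(5) by simp
  then show "(\<Sum>l<?N. (cyc_null_vec ?N v \<alpha> l)\<^sup>2) < 2"
    using \<open>v < ?N\<close> by (simp add: sum_squares_cyc_null_vec)
qed

end
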